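(* Let $\mathcal{T}$ be a stiffly-connected, edge-simple 3-dimensional truss with vertices at points $\mathbf{p}_1,\dots,\mathbf{p}_n$, and let $\mathbf{q}\in\mathbb{R}^{3n}$ be orthogonal to the null space of its stiffness matrix. For each oriented triangle $s=\langle s_1,s_2,s_3\rangle$ of the mesh there exists a (unique) vector $\bar{\mathbf{q}}^{\langle s\rangle}=\mathbf{q}+c^{\langle s\rangle\perp xy}\mathbf{p}^{\perp xy}+c^{\langle s\rangle\perp xz}\mathbf{p}^{\perp xz}+c^{\langle s\rangle\perp yz}\mathbf{p}^{\perp yz}$ with scalars $c^{\langle s\rangle\perp xy},c^{\langle s\rangle\perp xz},c^{\langle s\rangle\perp yz}\in\mathbb{R}$, such that (1) the plane containing the points $\bar{\mathbf{q}}^{\langle s\rangle}_{s_1},\bar{\mathbf{q}}^{\langle s\rangle}_{s_2},\bar{\mathbf{q}}^{\langle s\rangle}_{s_3}$ is parallel to the plane containing $\mathbf{p}_{s_1},\mathbf{p}_{s_2},\mathbf{p}_{s_3}$, and (2) the segment from $\bar{\mathbf{q}}^{\langle s\rangle}_{s_1}$ to $\bar{\mathbf{q}}^{\langle s\rangle}_{s_2}$ is parallel to $\mathbf{p}_{s_1}-\mathbf{p}_{s_2}$.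
   Context: A 3-dimensional truss has $n$ vertices at distinct points $\mathbf{p}_i\in\mathbb{R}^3$, a set of tetrahedra (four vertices each), edges all pairs of vertices sharing a tetrahedron, and positive stiffness coefficients $\gamma(e)$; its stiffness matrix is $\sum_{e=(i,j)}\frac{\gamma(e)}{\|\mathbf{p}_i-\mathbf{p}_j\|_2}\mathbf{b}^{(e)}\mathbf{b}^{(e)\top}$ where $\mathbf{b}^{(e)}\in\mathbb{R}^{3n}$ has block $i$ equal to $(\mathbf{p}_i-\mathbf{p}_j)/\|\mathbf{p}_i-\mathbf{p}_j\|_2$, block $j$ its negative, zeros elsewhere. Edge-simple: tetrahedra form a simplicial complex, each has constant-bounded aspect ratio, and edge lengths and stiffness coefficients are bounded above and below by positive constants. Stiffly-connected: the graph on tetrahedra with adjacency = sharing a triangle face is connected, and for each vertex its restriction to the tetrahedra containing that vertex is connected. For a vector $\mathbf{v}\in\mathbb{R}^{3n}$, $\mathbf{v}_i\in\mathbb{R}^3$ denotes its $i$-th block (coordinates $3i-2,\dots,3i$). Fix an index $c$; define $\mathbf{p}^{\perp xy},\mathbf{p}^{\perp xz},\mathbf{p}^{\perp yz}\in\mathbb{R}^{3n}$ by $\mathbf{p}^{\perp xy}_i=[-(\mathbf{p}_i-\mathbf{p}_c)_y,(\mathbf{p}_i-\mathbf{p}_c)_x,0]^\top$, $\mathbf{p}^{\perp xz}_i=[-(\mathbf{p}_i-\mathbf{p}_c)_z,0,(\mathbf{p}_i-\mathbf{p}_c)_x]^\top$, $\mathbf{p}^{\perp yz}_i=[0,-(\mathbf{p}_i-\mathbf{p}_c)_z,(\mathbf{p}_i-\mathbf{p}_c)_y]^\top$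 (these, together with the three translation vectors, span the null space of the stiffness matrix). An oriented triangle is an ordered triple of vertices forming a triangle face of some tetrahedron. *)

theory Defs
  imports "HOL-Analysis.Analysis"
begin

text \<open>Vertices are the elements of a finite type 'v (so n = CARD('v)); a vector of
  R^(3n) is a function 'v => real^3 (its blocks). Tetrahedra are 4-element vertex sets,
  stiffness coefficients are indexed by edges, i.e. two-element vertex sets.\<close>

definition blk_inner :: "('v::finite \<Rightarrow> real^3) \<Rightarrow> ('v \<Rightarrow> real^3) \<Rightarrow> real" where
  "blk_inner u w = (\<Sum>k\<in>UNIV. u k \<bullet> w k)"

definition truss_edges :: "'v set set \<Rightarrow> ('v \<times> 'v) set" where
  "truss_edges T = {(i, j). i \<noteq> j \<and> (\<exists>t\<in>T. i \<in> t \<and> j \<in> t)}"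

definition bvec :: "('v \<Rightarrow> real^3) \<Rightarrow> 'v \<Rightarrow> 'v \<Rightarrow> ('v \<Rightarrow> real^3)" where
  "bvec p i j = (\<lambda>k. if k = i then (1 / norm (p i - p j)) *\<^sub>R (p i - p j)
                     else if k = j then - ((1 / norm (p i - p j)) *\<^sub>R (p i - p j))
                     else 0)"

text \<open>Stiffness matrix applied to v: sum over unordered edges e={i,j} of
  gamma(e)/|p_i-p_j| * b_e b_e^T v; written as half the sum over ordered pairs
  (b_(i,j) b_(i,j)^T = b_(j,i) b_(j,i)^T).\<close>
definition stiffness_apply ::
  "('v::finite \<Rightarrow> real^3) \<Rightarrow> 'v set set \<Rightarrow> ('v set \<Rightarrow> real) \<Rightarrow> ('v \<Rightarrow> real^3) \<Rightarrow> ('v \<Rightarrow> real^3)" where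
  "stiffness_apply p T \<gamma> v = (\<lambda>k. (1/2) *\<^sub>R
      (\<Sum>(i, j)\<in>truss_edges T.
         (\<gamma> {i, j} / norm (p i - p j) * blk_inner (bvec p i j) v) *\<^sub>R bvec p i j k))"

definition stiffness_null_space ::
  "('v::finite \<Rightarrow> real^3) \<Rightarrow> 'v set set \<Rightarrow> ('v set \<Rightarrow> real) \<Rightarrow> ('v \<Rightarrow> real^3) set" where
  "stiffness_null_space p T \<gamma> = {v. stiffness_apply p T \<gamma> v = (\<lambda>_. 0)}"

text \<open>Edge-simple (for a single truss): vertices at distinct points, every vertex in some
  tetrahedron, tetrahedra are non-degenerate 4-sets forming a geometric simplicial complex,
  positive stiffness coefficients. (The constant bounds on aspect ratio, edge lengths and
  stiffnesses hold automatically for a single finite truss with these properties.)\<close>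
definition edge_simple :: "('v::finite \<Rightarrow> real^3) \<Rightarrow> 'v set set \<Rightarrow> ('v set \<Rightarrow> real) \<Rightarrow> bool" where
  "edge_simple p T \<gamma> \<longleftrightarrow>
     inj p \<and> \<Union>T = UNIV \<and>
     (\<forall>t\<in>T. card t = 4 \<and> \<not> affine_dependent (p ` t)) \<and>
     (\<forall>t1\<in>T. \<forall>t2\<in>T. convex hull (p ` t1) \<inter> convex hull (p ` t2) = convex hull (p ` (t1 \<inter> t2))) \<and>
     (\<forall>i j. (i, j) \<in> truss_edges T \<longrightarrow> \<gamma> {i, j} > 0)"

definition face_adj :: "'v set set \<Rightarrow> ('v set \<times> 'v set) set" where
  "face_adj S = {(a, b). a \<in> S \<and> b \<in> S \<and> card (a \<inter> b) = 3}"

definition stiffly_connected :: "'v set set \<Rightarrow> bool" where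
  "stiffly_connected T \<longleftrightarrow>
     (\<forall>a\<in>T. \<forall>b\<in>T. (a, b) \<in> (face_adj T)\<^sup>*) \<and>
     (\<forall>v. \<forall>a\<in>{t\<in>T. v \<in> t}. \<forall>b\<in>{t\<in>T. v \<in> t}. (a, b) \<in> (face_adj {t\<in>T. v \<in> t})\<^sup>*)"

definition oriented_triangle :: "'v set set \<Rightarrow> 'v \<Rightarrow> 'v \<Rightarrow> 'v \<Rightarrow> bool" where
  "oriented_triangle T s1 s2 s3 \<longleftrightarrow>
     s1 \<noteq> s2 \<and> s1 \<noteq> s3 \<and> s2 \<noteq> s3 \<and> (\<exists>t\<in>T. {s1, s2, s3} \<subseteq> t)"

definition p_perp_xy :: "('v \<Rightarrow> real^3) \<Rightarrow> 'v \<Rightarrow> ('v \<Rightarrow> real^3)" where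
  "p_perp_xy p c = (\<lambda>i. vector [- (p i - p c)$2, (p i - p c)$1, 0])"
definition p_perp_xz :: "('v \<Rightarrow> real^3) \<Rightarrow> 'v \<Rightarrow> ('v \<Rightarrow> real^3)" where
  "p_perp_xz p c = (\<lambda>i. vector [- (p i - p c)$3, 0, (p i - p c)$1])"
definition p_perp_yz :: "('v \<Rightarrow> real^3) \<Rightarrow> 'v \<Rightarrow> ('v \<Rightarrow> real^3)" where
  "p_perp_yz p c = (\<lambda>i. vector [0, - (p i - p c)$3, (p i - p c)$2])"

definition planes_parallel :: "real^3 \<Rightarrow> real^3 \<Rightarrow> real^3 \<Rightarrow> real^3 \<Rightarrow> real^3 \<Rightarrow> real^3 \<Rightarrow> bool" where
  "planes_parallel a1 a2 a3 b1 b2 b3 \<longleftrightarrow>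
     (\<exists>d. affine hull {a1, a2, a3} \<subseteq> (\<lambda>x. d + x) ` (affine hull {b1, b2, b3}))"

definition segment_parallel :: "real^3 \<Rightarrow> real^3 \<Rightarrow> real^3 \<Rightarrow> bool" where
  "segment_parallel a1 a2 w \<longleftrightarrow> (\<exists>t::real. a2 - a1 = t *\<^sub>R w)"

end

theory Submission
  imports Defs
begin

text \<open>The combinations of \<open>p\<^sup>\<perp>\<^sup>x\<^sup>y, p\<^sup>\<perp>\<^sup>x\<^sup>z, p\<^sup>\<perp>\<^sup>y\<^sup>z\<close> are exactly the infinitesimal rotations
  \<open>i \<mapsto> w \<times> (p\<^sub>i - p\<^sub>c)\<close> about \<open>p\<^sub>c\<close>, and such a rotation changes the edge vectors
  \<open>e\<^sub>k\<close> of the triangle of \<open>q\<close> into \<open>e\<^sub>k + w \<times> d\<^sub>k\<close>, where \<open>d\<^sub>k\<close> are the corresponding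
  edges of the triangle of \<open>p\<close>. Parallelism of the first edge fixes \<open>w\<close> up to a multiple
  of \<open>d\<^sub>1\<close>, and parallelism of the planes, i.e. \<open>(e\<^sub>2 + w \<times> d\<^sub>2) \<bullet> (d\<^sub>1 \<times> d\<^sub>2) = 0\<close>,
  fixes that multiple because \<open>(d\<^sub>1 \<times> d\<^sub>2) \<bullet> (d\<^sub>1 \<times> d\<^sub>2) \<noteq> 0\<close>.\<close>

lemma affine_hull_3_eq_translated_span:
  fixes a1 a2 a3 :: "'a::real_vector"
  shows "affine hull {a1, a2, a3} = (\<lambda>x. a1 + x) ` span {a2 - a1, a3 - a1}"
  by (simp add: affine_hull_insert_span_gen)

lemma planes_parallel_iff_span:
  "planes_parallel a1 a2 a3 b1 b2 b3 \<longleftrightarrow>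
     a2 - a1 \<in> span {b2 - b1, b3 - b1} \<and> a3 - a1 \<in> span {b2 - b1, b3 - b1}"
  (is "_ \<longleftrightarrow> ?in a2 \<and> ?in a3")
proof
  assume "planes_parallel a1 a2 a3 b1 b2 b3"
  then obtain d where d: "affine hull {a1, a2, a3} \<subseteq> (+) d ` (affine hull {b1, b2, b3})"
    by (auto simp: planes_parallel_def)
  have "a - d - b1 \<in> span {b2 - b1, b3 - b1}" if "a \<in> {a1, a2, a3}" for a
  proof -
    have "a \<in> (+) d ` (affine hull {b1, b2, b3})"
      using d hull_inc[OF that, of affine] by blast
    then show ?thesis by (auto simp: affine_hull_3_eq_translated_span)
  qed
  then have "(a - d - b1) - (a1 - d - b1) \<in> span {b2 - b1, b3 - b1}" if "a \<in> {a2, a3}" for a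
    using that by (blast intro: span_diff)
  then show "?in a2 \<and> ?in a3" by simp
next
  assume "?in a2 \<and> ?in a3"
  then have "span {a2 - a1, a3 - a1} \<subseteq> span {b2 - b1, b3 - b1}"
    by (simp add: span_minimal)
  then have "affine hull {a1, a2, a3} \<subseteq> (+) (a1 - b1) ` (affine hull {b1, b2, b3})"
    by (force simp: affine_hull_3_eq_translated_span image_image)
  then show "planes_parallel a1 a2 a3 b1 b2 b3"
    unfolding planes_parallel_def by blast
qed

lemma span_2_eq_orthogonal_cross3:
  fixes d1 d2 :: "real^3"
  assumes "cross3 d1 d2 \<noteq> 0"
  shows "span {d1, d2} = {x. x \<bullet> cross3 d1 d2 = 0}"
proof
  show "span {d1, d2} \<subseteq> {x. x \<bullet> cross3 d1 d2 = 0}"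
    by (rule span_minimal) (auto simp: subspace_hyperplane2 dot_cross_self)
next
  let ?n = "cross3 d1 d2"
  have n: "?n \<bullet> ?n \<noteq> 0" using assms by simp
  show "{x. x \<bullet> ?n = 0} \<subseteq> span {d1, d2}"
  proof
    fix x assume "x \<in> {x. x \<bullet> ?n = 0}"
    \<comment> \<open>coordinates of \<open>x\<close> in the basis \<open>d\<^sub>1, d\<^sub>2, d\<^sub>1 \<times> d\<^sub>2\<close>, by Cramer's rule\<close>
    moreover have "(?n \<bullet> ?n) *\<^sub>R x = (cross3 x d2 \<bullet> ?n) *\<^sub>R d1 + (cross3 d1 x \<bullet> ?n) *\<^sub>R d2
        + (x \<bullet> ?n) *\<^sub>R ?n"
      by (simp add: cross3_simps forall_3)
    ultimately have "(?n \<bullet> ?n) *\<^sub>R x = (cross3 x d2 \<bullet> ?n) *\<^sub>R d1 + (cross3 d1 x \<bullet> ?n) *\<^sub>R d2"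
      by simp
    then have "(?n \<bullet> ?n) *\<^sub>R x \<in> span {d1, d2}"
      by (simp add: span_add span_scale span_base)
    then show "x \<in> span {d1, d2}"
      using span_scale[of _ _ "inverse (?n \<bullet> ?n)"] n by fastforce
  qed
qed

lemma planes_parallel_iff_orthogonal_cross3:
  assumes "cross3 (b2 - b1) (b3 - b1) \<noteq> 0"
  shows "planes_parallel a1 a2 a3 b1 b2 b3 \<longleftrightarrow>
     (a2 - a1) \<bullet> cross3 (b2 - b1) (b3 - b1) = 0 \<and> (a3 - a1) \<bullet> cross3 (b2 - b1) (b3 - b1) = 0"
  by (simp add: planes_parallel_iff_span span_2_eq_orthogonal_cross3[OF assms])

lemma segment_parallel_reverse_iff:
  "segment_parallel a1 a2 (b1 - b2) \<longleftrightarrow> (\<exists>t. a2 - a1 = t *\<^sub>R (b2 - b1))"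
proof -
  have "t *\<^sub>R (b1 - b2) = (- t) *\<^sub>R (b2 - b1)" for t :: real
    by (simp add: algebra_simps)
  then show ?thesis
    unfolding segment_parallel_def by (metis minus_minus)
qed

lemma triangle_aligned_iff:
  assumes "cross3 (b2 - b1) (b3 - b1) \<noteq> 0"
  shows "planes_parallel a1 a2 a3 b1 b2 b3 \<and> segment_parallel a1 a2 (b1 - b2) \<longleftrightarrow>
     (\<exists>t. a2 - a1 = t *\<^sub>R (b2 - b1)) \<and> (a3 - a1) \<bullet> cross3 (b2 - b1) (b3 - b1) = 0"
proof -
  have "(a2 - a1) \<bullet> cross3 (b2 - b1) (b3 - b1) = 0" if "a2 - a1 = t *\<^sub>R (b2 - b1)" for t
    by (simp add: that dot_cross_self)
  then show ?thesis
    unfolding planes_parallel_iff_orthogonal_cross3[OF assms] segment_parallel_reverse_iff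
    by blast
qed

lemma nondegenerate_triangle_cross3_neq_0:
  assumes "edge_simple p T \<gamma>" and "oriented_triangle T s1 s2 s3"
  shows "cross3 (p s2 - p s1) (p s3 - p s1) \<noteq> 0"
proof -
  obtain t where "t \<in> T" "{s1, s2, s3} \<subseteq> t" and distinct: "s1 \<noteq> s2" "s1 \<noteq> s3" "s2 \<noteq> s3"
    using assms(2) by (auto simp: oriented_triangle_def)
  have "inj p" and "\<not> affine_dependent (p ` t)"
    using assms(1) \<open>t \<in> T\<close> by (auto simp: edge_simple_def)
  moreover have "{p s1, p s2, p s3} \<subseteq> p ` t"
    using \<open>{s1, s2, s3} \<subseteq> t\<close> by auto
  ultimately have "\<not> affine_dependent {p s1, p s2, p s3}"
    using affine_independent_subset by blast
  with distinct \<open>inj p\<close> have "\<not> collinear {p s1, p s2, p s3}"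
    by (auto simp: collinear_3_eq_affine_dependent dest: injD)
  moreover have "{p s1, p s2, p s3} = {p s2, p s1, p s3}"
    by blast
  ultimately show ?thesis
    using collinear_3[of "p s2" "p s1" "p s3"] by (simp add: cross_eq_0)
qed

lemma p_perp_combination_eq_cross3:
  "x + cxy *\<^sub>R p_perp_xy p c i + cxz *\<^sub>R p_perp_xz p c i + cyz *\<^sub>R p_perp_yz p c i
     = x + cross3 (vector [cyz, - cxz, cxy]) (p i - p c)"
  by (simp add: p_perp_xy_def p_perp_xz_def p_perp_yz_def cross3_def vec_eq_iff forall_3 algebra_simps)

lemma p_perp_translates_iff_cross3:
  "(\<exists>cxy cxz cyz :: real.
       qb = (\<lambda>i. q i + cxy *\<^sub>R p_perp_xy p c i + cxz *\<^sub>R p_perp_xz p c i + cyz *\<^sub>R p_perp_yz p c i))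
   \<longleftrightarrow> (\<exists>w. qb = (\<lambda>i. q i + cross3 w (p i - p c)))"
proof
  assume "\<exists>w. qb = (\<lambda>i. q i + cross3 w (p i - p c))"
  then obtain w where "qb = (\<lambda>i. q i + cross3 w (p i - p c))" ..
  moreover have "vector [w $ 1, - (- w $ 2), w $ 3] = w"
    by (simp add: vec_eq_iff forall_3)
  ultimately have "qb = (\<lambda>i. q i + (w $ 3) *\<^sub>R p_perp_xy p c i + (- w $ 2) *\<^sub>R p_perp_xz p c i
      + (w $ 1) *\<^sub>R p_perp_yz p c i)"
    by (simp only: p_perp_combination_eq_cross3)
  then show "\<exists>cxy cxz cyz :: real.
       qb = (\<lambda>i. q i + cxy *\<^sub>R p_perp_xy p c i + cxz *\<^sub>R p_perp_xz p c i + cyz *\<^sub>R p_perp_yz p c i)"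
    by blast
qed (auto simp: p_perp_combination_eq_cross3)

lemma cross3_cross3_right:
  fixes x y z :: "real^3"
  shows "cross3 x (cross3 y z) = (x \<bullet> z) *\<^sub>R y - (x \<bullet> y) *\<^sub>R z"
  by (simp add: cross3_simps forall_3)

lemma rotation_preserving_triangle_eq_0:
  fixes v d1 d2 :: "real^3"
  assumes n: "cross3 d1 d2 \<noteq> 0"
    and direction: "cross3 v d1 = t *\<^sub>R d1" and plane: "cross3 v d2 \<bullet> cross3 d1 d2 = 0"
  shows "v = 0"
proof -
  have "d1 \<noteq> 0" using n by auto
  have "t * (d1 \<bullet> d1) = 0"
    using direction dot_cross_self(3)[of v d1] by simp
  with \<open>d1 \<noteq> 0\<close> have "cross3 v d1 = 0" using direction by simp
  then have "(d1 \<bullet> d1) *\<^sub>R v = (d1 \<bullet> v) *\<^sub>R d1"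
    using cross3_cross3_right[of d1 v d1] by simp
  have "v = (1 / (d1 \<bullet> d1)) *\<^sub>R ((d1 \<bullet> d1) *\<^sub>R v)"
    using \<open>d1 \<noteq> 0\<close> by simp
  also have "\<dots> = (d1 \<bullet> v / (d1 \<bullet> d1)) *\<^sub>R d1"
    unfolding \<open>(d1 \<bullet> d1) *\<^sub>R v = (d1 \<bullet> v) *\<^sub>R d1\<close> by simp
  finally have v: "v = (d1 \<bullet> v / (d1 \<bullet> d1)) *\<^sub>R d1" .
  have "(d1 \<bullet> v / (d1 \<bullet> d1)) * (cross3 d1 d2 \<bullet> cross3 d1 d2) = 0"
    using plane by (subst (asm) v) (simp add: cross_mult_left)
  with n \<open>d1 \<noteq> 0\<close> have "d1 \<bullet> v = 0" by simp
  with v show ?thesis by simp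
qed

lemma ex1_rotation_aligning_triangle:
  fixes e1 e2 d1 d2 :: "real^3"
  assumes n: "cross3 d1 d2 \<noteq> 0"
  shows "\<exists>!w. (\<exists>t. e1 + cross3 w d1 = t *\<^sub>R d1) \<and> (e2 + cross3 w d2) \<bullet> cross3 d1 d2 = 0"
proof (rule ex_ex1I)
  let ?n = "cross3 d1 d2"
  have "d1 \<bullet> d1 \<noteq> 0" and "?n \<bullet> ?n \<noteq> 0" using n by auto
  \<comment> \<open>\<open>w\<^sub>0 \<times> d\<^sub>1\<close> cancels the part of \<open>e\<^sub>1\<close> orthogonal to \<open>d\<^sub>1\<close>; the multiple of \<open>d\<^sub>1\<close>
    added to it leaves \<open>w \<times> d\<^sub>1\<close> unchanged and solves the (linear) plane condition\<close>
  define w0 where "w0 = (1 / (d1 \<bullet> d1)) *\<^sub>R cross3 e1 d1"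
  define w where "w = w0 - ((e2 + cross3 w0 d2) \<bullet> ?n / (?n \<bullet> ?n)) *\<^sub>R d1"
  have "e1 + cross3 w d1 = ((e1 \<bullet> d1) / (d1 \<bullet> d1)) *\<^sub>R d1"
    using \<open>d1 \<bullet> d1 \<noteq> 0\<close>
    by (simp add: w_def w0_def Cross3.left_diff_distrib cross_mult_left cross_skew[of "cross3 e1 d1"]
        cross3_cross3_right scaleR_diff_right inner_commute)
  moreover have "(e2 + cross3 w d2) \<bullet> ?n = 0"
    using \<open>?n \<bullet> ?n \<noteq> 0\<close>
    by (simp add: w_def Cross3.left_diff_distrib cross_mult_left inner_diff_left inner_add_left)
  ultimately show "\<exists>w. (\<exists>t. e1 + cross3 w d1 = t *\<^sub>R d1) \<and> (e2 + cross3 w d2) \<bullet> ?n = 0"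
    by blast
next
  fix w w'
  assume "(\<exists>t. e1 + cross3 w d1 = t *\<^sub>R d1) \<and> (e2 + cross3 w d2) \<bullet> cross3 d1 d2 = 0"
    and "(\<exists>t. e1 + cross3 w' d1 = t *\<^sub>R d1) \<and> (e2 + cross3 w' d2) \<bullet> cross3 d1 d2 = 0"
  then obtain t t' where t: "e1 + cross3 w d1 = t *\<^sub>R d1" and t': "e1 + cross3 w' d1 = t' *\<^sub>R d1"
    and plane: "(e2 + cross3 w d2) \<bullet> cross3 d1 d2 = 0" and plane': "(e2 + cross3 w' d2) \<bullet> cross3 d1 d2 = 0"
    by blast
  have "cross3 (w - w') d1 = (e1 + cross3 w d1) - (e1 + cross3 w' d1)"
    by (simp add: Cross3.left_diff_distrib)
  also have "\<dots> = (t - t') *\<^sub>R d1"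
    by (simp add: t t' scaleR_diff_left)
  finally have direction: "cross3 (w - w') d1 = (t - t') *\<^sub>R d1" .
  have "cross3 (w - w') d2 \<bullet> cross3 d1 d2
      = (e2 + cross3 w d2) \<bullet> cross3 d1 d2 - (e2 + cross3 w' d2) \<bullet> cross3 d1 d2"
    by (simp add: Cross3.left_diff_distrib inner_diff_left inner_add_left)
  then have "cross3 (w - w') d2 \<bullet> cross3 d1 d2 = 0"
    by (simp only: plane plane' diff_self)
  from rotation_preserving_triangle_eq_0[OF n direction this] show "w = w'"
    by simp
qed

theorem lemma4p1:
  fixes p :: "'v::finite \<Rightarrow> real^3"
    and T :: "'v set set"
    and \<gamma> :: "'v set \<Rightarrow> real"
    and c :: 'v
    and q :: "'v \<Rightarrow> real^3"
    and s1 s2 s3 :: 'v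
  assumes "edge_simple p T \<gamma>"
    and "stiffly_connected T"
    and "\<forall>v\<in>stiffness_null_space p T \<gamma>. blk_inner q v = 0"
    and "oriented_triangle T s1 s2 s3"
  shows "\<exists>!qb. (\<exists>cxy cxz cyz :: real.
              qb = (\<lambda>i. q i + cxy *\<^sub>R p_perp_xy p c i + cxz *\<^sub>R p_perp_xz p c i
                          + cyz *\<^sub>R p_perp_yz p c i))
           \<and> planes_parallel (qb s1) (qb s2) (qb s3) (p s1) (p s2) (p s3)
           \<and> segment_parallel (qb s1) (qb s2) (p s1 - p s2)"
proof -
  let ?d1 = "p s2 - p s1" and ?d2 = "p s3 - p s1"
  let ?rotated = "\<lambda>w i. q i + cross3 w (p i - p c)"
  let ?aligns = "\<lambda>w. (\<exists>t. q s2 - q s1 + cross3 w ?d1 = t *\<^sub>R ?d1)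
    \<and> (q s3 - q s1 + cross3 w ?d2) \<bullet> cross3 ?d1 ?d2 = 0"
  have n: "cross3 ?d1 ?d2 \<noteq> 0"
    using assms(1,4) by (rule nondegenerate_triangle_cross3_neq_0)
  have "?rotated w j - ?rotated w i = q j - q i + cross3 w (p j - p i)" for w i j
    by (simp add: Cross3.right_diff_distrib algebra_simps)
  then have aligned_iff: "planes_parallel (?rotated w s1) (?rotated w s2) (?rotated w s3) (p s1) (p s2) (p s3)
      \<and> segment_parallel (?rotated w s1) (?rotated w s2) (p s1 - p s2) \<longleftrightarrow> ?aligns w" for w
    by (simp only: triangle_aligned_iff[OF n])
  obtain w where "?aligns w" and unique: "\<forall>w'. ?aligns w' \<longrightarrow> w' = w"
    using ex1_rotation_aligning_triangle[OF n] by (rule ex1E)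
  show ?thesis
    unfolding p_perp_translates_iff_cross3
  proof (rule ex1I[of _ "?rotated w"], goal_cases)
    case 1
    show ?case using aligned_iff[of w] \<open>?aligns w\<close> by blast
  next
    case (2 qb)
    then obtain w' where qb: "qb = ?rotated w'" by blast
    with 2 have "?aligns w'" using aligned_iff[of w'] by simp
    with qb unique show ?case by simp
  qed
qed

end
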